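(* Let $k\ge0$ and let $\alpha\in[0,1]^m$ be a common zero of all the polynomials $Q_\kappa=\sum_{|\mu|=k+1}A_k[\kappa,\mu]P_\mu$, $|\kappa|=k$. Then $v:=\sum_{|\nu|\le k}d_{2\nu}P_\nu(\alpha)P_\nu$ is an eigenvector of $T_k$ with eigenvalue $\sigma(\alpha)$.
   Context: Setting: $1\le m\le n/2$; $\mathcal G_{m,n}$ Grassmannian of $m$-subspaces of $\mathbb R^n$; $y_i(p,q)=\cos^2\theta_i$ for principal angles. Partitions $\kappa=(\kappa_1\ge\dots\ge\kappa_m\ge0)$, $|\kappa|=\sum\kappa_i$. $V_n^\lambda$ irreducible $O(n,\mathbb R)$-representation indexed by $\lambda$; $L^2(\mathcal G_{m,n})\cong\bigoplus_\kappa V_n^{2\kappa}$, $d_{2\kappa}=\dim V_n^{2\kappa}$. $P_\kappa$ is the zonal polynomial (symmetric in $y_1,\dots,y_m$, degree $|\kappa|$, $P_\kappa(1,\dots,1)=1$, $p\mapsto P_\kappa(y(p,q))$ in the component $\cong V_n^{2\kappa}$). $S_k$ is the space of symmetric polynomials of degree $\le k$, with orthogonal basis $(P_\kappa)_{|\kappa|\le k}$ for $[f,g]=\int_{[0,1]^m}f\bar g\,d\mu$, $d\mu=c\prod_{i<j}|y_i-y_j|\prod_iy_i^{-1/2}(1-y_i)^{n/2-m-1/2}dy_i$, $[P_\kappa,P_\kappa]=d_{2\kappa}^{-1}$. $\sigma=y_1+\dots+y_m$; $T_k(P)=\mathrm{pr}_{S_k}(\sigma P)$ on $S_k$. $A_k$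 is the matrix with $\sigma\mathbb P_k=A_k\mathbb P_{k+1}+B_k\mathbb P_k+C_k\mathbb P_{k-1}$, $\mathbb P_k$ the vector of the $P_\kappa$ with $|\kappa|=k$. *)

theory Defs
  imports "HOL-Analysis.Analysis"
begin

text \<open>Points of [0,1]^m are represented as y :: nat => real, only y 0, ..., y (m-1) matter.
  Polynomials in m variables are represented by the polynomial functions they define.\<close>

definition mono_eval :: "nat \<Rightarrow> (nat \<Rightarrow> nat) \<Rightarrow> (nat \<Rightarrow> real) \<Rightarrow> real" where
  "mono_eval m e y = (\<Prod>i<m. y i ^ e i)"

definition is_poly :: "nat \<Rightarrow> nat \<Rightarrow> ((nat \<Rightarrow> real) \<Rightarrow> real) \<Rightarrow> bool" where
  "is_poly m k f \<longleftrightarrow> (\<exists>E c. finite E \<and>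
      (\<forall>e\<in>E. (\<forall>i\<ge>m. e i = 0) \<and> (\<Sum>i<m. e i) \<le> k) \<and>
      f = (\<lambda>y. \<Sum>e\<in>E. c e * mono_eval m e y))"

definition symmetric_fn :: "nat \<Rightarrow> ((nat \<Rightarrow> real) \<Rightarrow> real) \<Rightarrow> bool" where
  "symmetric_fn m f \<longleftrightarrow> (\<forall>\<pi>. \<pi> permutes {..<m} \<longrightarrow> (\<forall>y. f (y \<circ> \<pi>) = f y))"

definition Sk :: "nat \<Rightarrow> nat \<Rightarrow> ((nat \<Rightarrow> real) \<Rightarrow> real) set" where
  "Sk m k = {f. is_poly m k f \<and> symmetric_fn m f}"

definition is_partition :: "nat \<Rightarrow> (nat \<Rightarrow> nat) \<Rightarrow> bool" where
  "is_partition m \<kappa> \<longleftrightarrow> (\<forall>i j. i \<le> j \<longrightarrow> \<kappa> j \<le> \<kappa> i) \<and> (\<forall>i\<ge>m. \<kappa> i = 0)"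

definition psize :: "nat \<Rightarrow> (nat \<Rightarrow> nat) \<Rightarrow> nat" where
  "psize m \<kappa> = (\<Sum>i<m. \<kappa> i)"

definition parts_eq :: "nat \<Rightarrow> nat \<Rightarrow> (nat \<Rightarrow> nat) set" where
  "parts_eq m k = {\<kappa>. is_partition m \<kappa> \<and> psize m \<kappa> = k}"

definition parts_le :: "nat \<Rightarrow> nat \<Rightarrow> (nat \<Rightarrow> nat) set" where
  "parts_le m k = {\<kappa>. is_partition m \<kappa> \<and> psize m \<kappa> \<le> k}"

definition sigma :: "nat \<Rightarrow> (nat \<Rightarrow> real) \<Rightarrow> real" where
  "sigma m y = (\<Sum>i<m. y i)"

definition cube :: "nat \<Rightarrow> (nat \<Rightarrow> real) set" where
  "cube m = {y. \<forall>i<m. 0 \<le> y i \<and> y i \<le> 1}"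

definition weight :: "nat \<Rightarrow> nat \<Rightarrow> (nat \<Rightarrow> real) \<Rightarrow> real" where
  "weight m n y = (\<Prod>i<m. \<Prod>j<m. if i < j then \<bar>y i - y j\<bar> else 1) *
     (\<Prod>i<m. y i powr (-1/2) * (1 - y i) powr (real n / 2 - real m - 1/2))"

definition Lm :: "nat \<Rightarrow> (nat \<Rightarrow> real) measure" where
  "Lm m = PiM {..<m} (\<lambda>_. lborel)"

text \<open>The constant c normalises mu to a probability measure (so that [P_0,P_0] = 1 = 1/d_0).\<close>
definition norm_const :: "nat \<Rightarrow> nat \<Rightarrow> real" where
  "norm_const m n = 1 / (\<integral>y. indicator (cube m) y * weight m n y \<partial>Lm m)"

definition ip :: "nat \<Rightarrow> nat \<Rightarrow> ((nat \<Rightarrow> real) \<Rightarrow> real) \<Rightarrow> ((nat \<Rightarrow> real) \<Rightarrow> real) \<Rightarrow> real" where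
  "ip m n f g = norm_const m n *
     (\<integral>y. indicator (cube m) y * weight m n y * f y * g y \<partial>Lm m)"

text \<open>T_k(f) = orthogonal projection onto S_k of sigma * f.\<close>
definition Tk :: "nat \<Rightarrow> nat \<Rightarrow> nat \<Rightarrow> ((nat \<Rightarrow> real) \<Rightarrow> real) \<Rightarrow> ((nat \<Rightarrow> real) \<Rightarrow> real)" where
  "Tk m n k f = (THE h. h \<in> Sk m k \<and>
      (\<forall>q\<in>Sk m k. ip m n (\<lambda>y. sigma m y * f y - h y) q = 0))"

definition zonal_family :: "nat \<Rightarrow> nat \<Rightarrow> ((nat \<Rightarrow> nat) \<Rightarrow> (nat \<Rightarrow> real) \<Rightarrow> real) \<Rightarrow> bool" where
  "zonal_family m n P \<longleftrightarrow>
     (\<forall>\<kappa>. is_partition m \<kappa> \<longrightarrow> P \<kappa> \<in> Sk m (psize m \<kappa>) \<and> P \<kappa> (\<lambda>_. 1) = 1) \<and>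
     (\<forall>\<kappa> \<rho>. is_partition m \<kappa> \<longrightarrow> is_partition m \<rho> \<longrightarrow> \<kappa> \<noteq> \<rho> \<longrightarrow> ip m n (P \<kappa>) (P \<rho>) = 0) \<and>
     (\<forall>j. \<forall>f\<in>Sk m j. \<exists>c. f = (\<lambda>y. \<Sum>\<kappa>\<in>parts_le m j. c \<kappa> * P \<kappa> y))"

text \<open>d_{2 kappa}, via [P_kappa, P_kappa] = 1 / d_{2 kappa}.\<close>
definition dz :: "nat \<Rightarrow> nat \<Rightarrow> ((nat \<Rightarrow> nat) \<Rightarrow> (nat \<Rightarrow> real) \<Rightarrow> real) \<Rightarrow> (nat \<Rightarrow> nat) \<Rightarrow> real" where
  "dz m n P \<kappa> = 1 / ip m n (P \<kappa>) (P \<kappa>)"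

end

theory Submission
  imports Defs "HOL-Computational_Algebra.Polynomial"
begin

text \<open>The function v is the reproducing kernel of S_k at \<alpha>: [v, f] = f(\<alpha>) for every f in S_k.
  Multiplication by \<sigma> is self-adjoint, so [\<sigma> v, P_\<rho>] = [v, \<sigma> P_\<rho>].  For |\<rho>| < k the
  polynomial \<sigma> P_\<rho> lies in S_k and this equals \<sigma>(\<alpha>) P_\<rho>(\<alpha>).  For |\<rho>| = k, \<sigma> P_\<rho>
  differs from an element of S_k by its top-degree part Q_\<rho>, which is orthogonal to v and
  vanishes at \<alpha>; so again [\<sigma> v, P_\<rho>] = \<sigma>(\<alpha>) P_\<rho>(\<alpha>) = [\<sigma>(\<alpha>) v, P_\<rho>].  Hence
  \<sigma> v - \<sigma>(\<alpha>) v is orthogonal to S_k, i.e. T_k v = \<sigma>(\<alpha>) v.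

  The analytic input is that [-,-] is a genuine inner product on polynomials: for n \<ge> 2m the
  weight is dominated by an integrable product, and it is positive near any interior point
  with distinct coordinates, so [f, f] > 0 for every polynomial f \<noteq> 0.\<close>

definition monomial_exponent :: "nat \<Rightarrow> nat \<Rightarrow> (nat \<Rightarrow> nat) \<Rightarrow> bool" where
  "monomial_exponent m k e \<longleftrightarrow> (\<forall>i\<ge>m. e i = 0) \<and> (\<Sum>i<m. e i) \<le> k"

lemma is_polyE:
  assumes "is_poly m k f"
  obtains E c where "finite E" "\<forall>e\<in>E. monomial_exponent m k e"
    "f = (\<lambda>y. \<Sum>e\<in>E. c e * mono_eval m e y)"
  using assms unfolding is_poly_def monomial_exponent_def by blast

lemma is_poly_sum_monomials:
  assumes "finite I" "\<And>i. i \<in> I \<Longrightarrow> monomial_exponent m k (ex i)"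
  shows "is_poly m k (\<lambda>y. \<Sum>i\<in>I. c i * mono_eval m (ex i) y)"
  unfolding is_poly_def
proof (intro exI conjI)
  show "finite (ex ` I)" using assms(1) by simp
  show "\<forall>e\<in>ex ` I. (\<forall>i\<ge>m. e i = 0) \<and> (\<Sum>i<m. e i) \<le> k"
    using assms(2) by (auto simp: monomial_exponent_def)
  show "(\<lambda>y. \<Sum>i\<in>I. c i * mono_eval m (ex i) y) =
    (\<lambda>y. \<Sum>e\<in>ex ` I. (\<Sum>i\<in>{x\<in>I. ex x = e}. c i) * mono_eval m e y)"
  proof
    fix y
    have "(\<Sum>i\<in>I. c i * mono_eval m (ex i) y) =
       (\<Sum>e\<in>ex ` I. \<Sum>i\<in>{x\<in>I. ex x = e}. c i * mono_eval m (ex i) y)"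
      using assms(1) by (rule sum.image_gen)
    also have "\<dots> = (\<Sum>e\<in>ex ` I. (\<Sum>i\<in>{x\<in>I. ex x = e}. c i) * mono_eval m e y)"
      by (intro sum.cong refl) (auto simp: sum_distrib_right)
    finally show "(\<Sum>i\<in>I. c i * mono_eval m (ex i) y) =
       (\<Sum>e\<in>ex ` I. (\<Sum>i\<in>{x\<in>I. ex x = e}. c i) * mono_eval m e y)" .
  qed
qed

lemma is_poly_const: "is_poly m k (\<lambda>_. c)"
proof -
  have "is_poly m k (\<lambda>y. \<Sum>i\<in>{()}. c * mono_eval m (\<lambda>_. 0) y)"
    by (rule is_poly_sum_monomials) (auto simp: monomial_exponent_def)
  then show ?thesis by (simp add: mono_eval_def)
qed

lemma is_poly_add:
  assumes "is_poly m k f" "is_poly m k g"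
  shows "is_poly m k (\<lambda>y. f y + g y)"
proof -
  obtain E1 c1 where 1: "finite E1" "\<forall>e\<in>E1. monomial_exponent m k e"
      "f = (\<lambda>y. \<Sum>e\<in>E1. c1 e * mono_eval m e y)"
    using assms(1) by (rule is_polyE)
  obtain E2 c2 where 2: "finite E2" "\<forall>e\<in>E2. monomial_exponent m k e"
      "g = (\<lambda>y. \<Sum>e\<in>E2. c2 e * mono_eval m e y)"
    using assms(2) by (rule is_polyE)
  have "is_poly m k (\<lambda>y. \<Sum>i\<in>E1 <+> E2. case_sum c1 c2 i * mono_eval m (case_sum id id i) y)"
    using 1 2 by (intro is_poly_sum_monomials) auto
  then show ?thesis using 1 2 by (simp add: sum.Plus o_def)
qed

lemma is_poly_cmult:
  assumes "is_poly m k f"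
  shows "is_poly m k (\<lambda>y. a * f y)"
proof -
  obtain E c where 1: "finite E" "\<forall>e\<in>E. monomial_exponent m k e"
      "f = (\<lambda>y. \<Sum>e\<in>E. c e * mono_eval m e y)"
    using assms by (rule is_polyE)
  have "is_poly m k (\<lambda>y. \<Sum>e\<in>E. (a * c e) * mono_eval m e y)"
    using 1 by (intro is_poly_sum_monomials) auto
  then show ?thesis using 1 by (simp add: sum_distrib_left mult.assoc)
qed

lemma is_poly_diff:
  assumes "is_poly m k f" "is_poly m k g"
  shows "is_poly m k (\<lambda>y. f y - g y)"
  using is_poly_add[OF assms(1) is_poly_cmult[OF assms(2), of "-1"]] by simp

lemma is_poly_mono:
  assumes "is_poly m k f" "k \<le> k'"
  shows "is_poly m k' f"
  using assms unfolding is_poly_def by (blast intro: order_trans)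

lemma is_poly_sigma_mult:
  assumes "is_poly m k f"
  shows "is_poly m (Suc k) (\<lambda>y. sigma m y * f y)"
proof -
  obtain E c where 1: "finite E" "\<forall>e\<in>E. monomial_exponent m k e"
      "f = (\<lambda>y. \<Sum>e\<in>E. c e * mono_eval m e y)"
    using assms by (rule is_polyE)
  define ex where "ex = (\<lambda>(i::nat, e::nat\<Rightarrow>nat). e(i := Suc (e i)))"
  have "monomial_exponent m (Suc k) (ex p)" if pE: "p \<in> {..<m} \<times> E" for p
  proof -
    obtain i e where p: "p = (i, e)" "i < m" "e \<in> E" using pE by (cases p) auto
    have "(\<Sum>j<m. (e(i := Suc (e i))) j) = (\<Sum>j<m. e j + (if j = i then 1 else 0))"
      by (intro sum.cong refl) auto
    also have "\<dots> = Suc (\<Sum>j<m. e j)" using p(2) by (simp add: sum.distrib)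
    finally show ?thesis using 1(2) p by (auto simp: monomial_exponent_def ex_def)
  qed
  then have "is_poly m (Suc k) (\<lambda>y. \<Sum>p\<in>{..<m} \<times> E. c (snd p) * mono_eval m (ex p) y)"
    using 1 by (intro is_poly_sum_monomials) auto
  moreover have "mono_eval m (ex (i, e)) y = y i * mono_eval m e y" if "i < m" for i e y
  proof -
    have "mono_eval m (ex (i, e)) y = (\<Prod>j<m. y j ^ e j * (if j = i then y j else 1))"
      unfolding ex_def mono_eval_def by (intro prod.cong refl) auto
    then show ?thesis using that by (simp add: prod.distrib mono_eval_def)
  qed
  then have "(\<Sum>p\<in>{..<m} \<times> E. c (snd p) * mono_eval m (ex p) y) = sigma m y * f y" for y
  proof -
    assume mono_ex: "\<And>i e y. i < m \<Longrightarrow> mono_eval m (ex (i, e)) y = y i * mono_eval m e y"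
    have "(\<Sum>p\<in>{..<m} \<times> E. c (snd p) * mono_eval m (ex p) y) =
        (\<Sum>i<m. \<Sum>e\<in>E. c e * mono_eval m (ex (i, e)) y)"
      by (simp add: sum.cartesian_product split_beta)
    also have "\<dots> = (\<Sum>i<m. \<Sum>e\<in>E. y i * (c e * mono_eval m e y))"
      by (intro sum.cong refl) (simp add: mono_ex mult_ac)
    also have "\<dots> = sigma m y * f y"
      by (simp add: 1(3) sigma_def sum_distrib_left sum_distrib_right sum.swap[of _ E])
    finally show ?thesis .
  qed
  ultimately show ?thesis by simp
qed

lemma is_poly_bounded_on_cube:
  assumes "is_poly m k f"
  obtains K where "\<And>y. y \<in> cube m \<Longrightarrow> \<bar>f y\<bar> \<le> K"
proof -
  obtain E c where 1: "finite E" "\<forall>e\<in>E. monomial_exponent m k e"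
      "f = (\<lambda>y. \<Sum>e\<in>E. c e * mono_eval m e y)"
    using assms by (rule is_polyE)
  have "\<bar>f y\<bar> \<le> (\<Sum>e\<in>E. \<bar>c e\<bar>)" if "y \<in> cube m" for y
  proof -
    have mono_le: "\<bar>mono_eval m e y\<bar> \<le> 1" for e
      unfolding mono_eval_def abs_prod using that
      by (intro prod_le_1) (auto simp: cube_def power_le_one)
    have "\<bar>f y\<bar> \<le> (\<Sum>e\<in>E. \<bar>c e * mono_eval m e y\<bar>)" unfolding 1(3) by (rule sum_abs)
    also have "\<dots> \<le> (\<Sum>e\<in>E. \<bar>c e\<bar>)"
      using mono_le by (intro sum_mono) (simp add: abs_mult mult_left_le)
    finally show ?thesis .
  qed
  then show ?thesis using that by blast
qed

lemma is_poly_on_line: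
  assumes "is_poly m k f"
  obtains p where "\<And>t. f (\<lambda>i. a i + t * (b i - a i)) = poly p t"
proof -
  obtain E c where 1: "finite E" "\<forall>e\<in>E. monomial_exponent m k e"
      "f = (\<lambda>y. \<Sum>e\<in>E. c e * mono_eval m e y)"
    using assms by (rule is_polyE)
  define p where "p = (\<Sum>e\<in>E. smult (c e) (\<Prod>i<m. [:a i, b i - a i:] ^ e i))"
  have "f (\<lambda>i. a i + t * (b i - a i)) = poly p t" for t
    by (simp add: 1(3) p_def poly_sum poly_prod mono_eval_def algebra_simps)
  then show ?thesis using that by blast
qed

lemma borel_measurable_is_poly:
  "is_poly m k f \<Longrightarrow> f \<in> borel_measurable (Lm m)"
  unfolding is_poly_def Lm_def mono_eval_def by auto


section \<open>Integrability of the weight\<close>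

definition endpoint_majorant :: "real \<Rightarrow> real" where
  "endpoint_majorant t =
     indicator {0<..1} t * t powr (-1/2) + indicator {0<..1} (1 - t) * (1 - t) powr (-1/2)"

lemma endpoint_majorant_nonneg: "0 \<le> endpoint_majorant t"
  unfolding endpoint_majorant_def by (auto simp: indicator_def)

lemma weight_factor_le_endpoint_majorant:
  fixes t a :: real
  assumes t: "0 \<le> t" "t \<le> 1" and a: "-1/2 \<le> a"
  shows "t powr (-1/2) * (1 - t) powr a \<le> endpoint_majorant t"
proof (cases "t = 0 \<or> t = 1")
  case True
  then show ?thesis using endpoint_majorant_nonneg[of t] by auto
next
  case False
  then have t0: "0 < t" "t < 1" using t by auto
  define s r where "s = sqrt t" and "r = sqrt (1 - t)"
  have s0: "s > 0" and r0: "r > 0" using t0 by (auto simp: s_def r_def)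
  have "s\<^sup>2 + r\<^sup>2 = 1" using t0 by (simp add: s_def r_def)
  then have "1 \<le> (r + s)\<^sup>2"
    using mult_pos_pos[OF r0 s0] by (simp add: power2_sum)
  then have "1 \<le> r + s" using s0 r0 power2_le_imp_le[of 1 "r + s"] by simp
  then have "1 / s * (1 / r) \<le> 1 / s + 1 / r" using s0 r0 by (simp add: field_simps)
  then have sum_bound: "t powr (-1/2) * (1 - t) powr (-1/2) \<le> t powr (-1/2) + (1 - t) powr (-1/2)"
    using t0 by (simp add: s_def r_def powr_minus_divide powr_half_sqrt)
  have "t powr (-1/2) * (1 - t) powr a \<le> t powr (-1/2) * (1 - t) powr (-1/2)"
    using t0 a by (intro mult_left_mono powr_mono') auto
  also have "\<dots> \<le> t powr (-1/2) + (1 - t) powr (-1/2)" by (rule sum_bound)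
  also have "\<dots> = endpoint_majorant t" using t0 by (simp add: endpoint_majorant_def indicator_def)
  finally show ?thesis .
qed

lemma integrable_endpoint_majorant: "integrable lborel endpoint_majorant"
proof -
  have at_0: "integrable lborel (\<lambda>t::real. indicator {0<..1} t * t powr (-1/2))"
  proof -
    have "integrable lebesgue (\<lambda>x. indicat_real {0<..1} x *\<^sub>R (x::real) powr (-1/2))"
      by (intro nonnegative_absolutely_integrable_1 [unfolded set_integrable_def]
          integrable_on_powr_from_0') auto
    then show ?thesis by (subst integrable_completion[symmetric]) auto
  qed
  then have "integrable lborel (\<lambda>t::real. indicator {0<..1} (1 - t) * (1 - t) powr (-1/2))"
    using lborel_integrable_real_affine_iff[of "-1" "\<lambda>t::real. indicator {0<..1} t * t powr (-1/2)" 1]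
    by simp
  with at_0 show ?thesis
    unfolding endpoint_majorant_def by (rule Bochner_Integration.integrable_add)
qed

lemma weight_nonneg: "0 \<le> weight m n y"
  unfolding weight_def by (intro mult_nonneg_nonneg prod_nonneg) auto

lemma weight_le_endpoint_majorant:
  assumes "2 * m \<le> n" "y \<in> cube m"
  shows "weight m n y \<le> (\<Prod>i<m. endpoint_majorant (y i))"
proof -
  have a: "-1/2 \<le> real n / 2 - real m - 1/2" using assms(1) by linarith
  have y: "0 \<le> y i \<and> y i \<le> 1" if "i < m" for i using assms(2) that by (auto simp: cube_def)
  have "0 \<le> (if i < j then \<bar>y i - y j\<bar> else 1) \<and> (if i < j then \<bar>y i - y j\<bar> else 1) \<le> 1"
    if "i < m" "j < m" for i j
    using y[OF that(1)] y[OF that(2)] by auto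
  then have "0 \<le> (\<Prod>j<m. if i < j then \<bar>y i - y j\<bar> else 1) \<and>
      (\<Prod>j<m. if i < j then \<bar>y i - y j\<bar> else 1) \<le> 1" if "i < m" for i
    using that by (intro conjI prod_nonneg prod_le_1) auto
  then have vandermonde: "(\<Prod>i<m. \<Prod>j<m. if i < j then \<bar>y i - y j\<bar> else 1) \<le> 1"
    by (intro prod_le_1) auto
  have "weight m n y \<le> 1 * (\<Prod>i<m. y i powr (-1/2) * (1 - y i) powr (real n / 2 - real m - 1/2))"
    unfolding weight_def using vandermonde by (intro mult_right_mono prod_nonneg) auto
  also have "\<dots> \<le> (\<Prod>i<m. endpoint_majorant (y i))"
    using weight_factor_le_endpoint_majorant[OF _ _ a] y by (auto intro!: prod_mono)
  finally show ?thesis .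
qed

interpretation lborel_product: product_sigma_finite "\<lambda>_::nat. lborel" by standard

lemma borel_measurable_indicator_cube: "(\<lambda>y. indicator (cube m) y :: real) \<in> borel_measurable (Lm m)"
proof -
  have "(\<lambda>y. indicator (cube m) y :: real) = (\<lambda>y. if (\<forall>i\<in>{..<m}. 0 \<le> y i \<and> y i \<le> 1) then 1 else 0)"
    by (auto simp: cube_def indicator_def fun_eq_iff)
  also have "\<dots> \<in> borel_measurable (Lm m)" unfolding Lm_def by measurable
  finally show ?thesis .
qed

lemma borel_measurable_weight: "weight m n \<in> borel_measurable (Lm m)"
  unfolding Lm_def weight_def by measurable

lemma integrable_weighted_bounded:
  assumes "2 * m \<le> n" "g \<in> borel_measurable (Lm m)" "\<And>y. y \<in> cube m \<Longrightarrow> \<bar>g y\<bar> \<le> K"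
  shows "integrable (Lm m) (\<lambda>y. indicator (cube m) y * weight m n y * g y)"
proof (rule Bochner_Integration.integrable_bound[OF _ _ AE_I2])
  show "integrable (Lm m) (\<lambda>y. K * (\<Prod>i\<in>{..<m}. endpoint_majorant (y i)))"
    unfolding Lm_def
    by (intro Bochner_Integration.integrable_mult_right lborel_product.product_integrable_prod
        integrable_endpoint_majorant) auto
  show "(\<lambda>y. indicator (cube m) y * weight m n y * g y) \<in> borel_measurable (Lm m)"
    using borel_measurable_indicator_cube borel_measurable_weight assms(2) by measurable
  fix y
  show "norm (indicator (cube m) y * weight m n y * g y)
      \<le> norm (K * (\<Prod>i\<in>{..<m}. endpoint_majorant (y i)))"
  proof (cases "y \<in> cube m")
    case True
    have K: "0 \<le> K" using assms(3)[OF True] by linarith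
    have "\<bar>weight m n y * g y\<bar> = weight m n y * \<bar>g y\<bar>"
      using weight_nonneg by (simp add: abs_mult)
    also have "\<dots> \<le> (\<Prod>i<m. endpoint_majorant (y i)) * K"
      using weight_le_endpoint_majorant[OF assms(1) True] assms(3)[OF True] weight_nonneg
      by (intro mult_mono prod_nonneg endpoint_majorant_nonneg) auto
    finally show ?thesis using True K endpoint_majorant_nonneg
      by (simp add: abs_mult prod_nonneg mult.commute)
  qed simp
qed

lemma integrable_weighted_poly_mult:
  assumes "2 * m \<le> n" "is_poly m k f" "is_poly m k' g"
  shows "integrable (Lm m) (\<lambda>y. indicator (cube m) y * weight m n y * (f y * g y))"
proof -
  obtain K1 where K1: "\<And>y. y \<in> cube m \<Longrightarrow> \<bar>f y\<bar> \<le> K1"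
    using is_poly_bounded_on_cube[OF assms(2)] by blast
  obtain K2 where K2: "\<And>y. y \<in> cube m \<Longrightarrow> \<bar>g y\<bar> \<le> K2"
    using is_poly_bounded_on_cube[OF assms(3)] by blast
  show ?thesis
  proof (rule integrable_weighted_bounded[OF assms(1)])
    show "(\<lambda>y. f y * g y) \<in> borel_measurable (Lm m)"
      using assms(2,3) by (intro borel_measurable_times borel_measurable_is_poly)
    fix y assume "y \<in> cube m"
    then have "\<bar>f y\<bar> \<le> K1" "\<bar>g y\<bar> \<le> K2" using K1 K2 by auto
    then show "\<bar>f y * g y\<bar> \<le> K1 * K2" unfolding abs_mult by (intro mult_mono) auto
  qed
qed

section \<open>Positivity of the weighted square integral\<close>

text \<open>Neighbourhoods of c with respect to the first m coordinates only; the other coordinates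
  play no role in integrals over Lm m.\<close>
definition coord_nhds :: "nat \<Rightarrow> (nat \<Rightarrow> real) \<Rightarrow> (nat \<Rightarrow> real) filter" where
  "coord_nhds m c = (INF d\<in>{0<..}. principal {y. \<forall>i<m. \<bar>y i - c i\<bar> < d})"

lemma eventually_coord_nhds:
  "eventually P (coord_nhds m c) \<longleftrightarrow> (\<exists>d>0. \<forall>y. (\<forall>i<m. \<bar>y i - c i\<bar> < d) \<longrightarrow> P y)"
  unfolding coord_nhds_def
proof (subst eventually_INF_base)
  fix a b :: real assume "a \<in> {0<..}" "b \<in> {0<..}"
  then show "\<exists>x\<in>{0<..}. principal {y. \<forall>i<m. \<bar>y i - c i\<bar> < x} \<le>
      inf (principal {y. \<forall>i<m. \<bar>y i - c i\<bar> < a}) (principal {y. \<forall>i<m. \<bar>y i - c i\<bar> < b})"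
    by (intro bexI[of _ "min a b"]) auto
qed (auto simp: eventually_principal)

lemma tendsto_coord_nhds: "i < m \<Longrightarrow> ((\<lambda>y. y i) \<longlongrightarrow> c i) (coord_nhds m c)"
  unfolding tendsto_iff eventually_coord_nhds dist_real_def by (metis (mono_tags, lifting))

lemma tendsto_poly_coord_nhds:
  assumes "is_poly m k f"
  shows "(f \<longlongrightarrow> f c) (coord_nhds m c)"
proof -
  obtain E a where 1: "finite E" "f = (\<lambda>y. \<Sum>e\<in>E. a e * mono_eval m e y)"
    using assms by (rule is_polyE)
  have "((\<lambda>y. \<Sum>e\<in>E. a e * (\<Prod>i<m. y i ^ e i)) \<longlongrightarrow> (\<Sum>e\<in>E. a e * (\<Prod>i<m. c i ^ e i)))
      (coord_nhds m c)"
    by (intro tendsto_intros tendsto_coord_nhds) auto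
  then show ?thesis by (simp add: 1(2) mono_eval_def)
qed

lemma tendsto_weight_coord_nhds:
  assumes "\<And>i. i < m \<Longrightarrow> 0 < c i \<and> c i < 1"
  shows "(weight m n \<longlongrightarrow> weight m n c) (coord_nhds m c)"
proof -
  have "((\<lambda>y. if i < j then \<bar>y i - y j\<bar> else 1) \<longlongrightarrow> (if i < j then \<bar>c i - c j\<bar> else 1))
      (coord_nhds m c)" if "i < m" "j < m" for i j
    using that by (cases "i < j") (auto intro!: tendsto_intros tendsto_coord_nhds)
  then have differences: "((\<lambda>y. \<Prod>i<m. \<Prod>j<m. if i < j then \<bar>y i - y j\<bar> else 1) \<longlongrightarrow>
      (\<Prod>i<m. \<Prod>j<m. if i < j then \<bar>c i - c j\<bar> else 1)) (coord_nhds m c)"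
    by (intro tendsto_prod) auto
  have "((\<lambda>y. y i powr (-1/2) * (1 - y i) powr (real n / 2 - real m - 1/2)) \<longlongrightarrow>
      c i powr (-1/2) * (1 - c i) powr (real n / 2 - real m - 1/2)) (coord_nhds m c)"
    if i: "i < m" for i
  proof -
    have "c i \<noteq> 0" "1 - c i \<noteq> 0" using assms[OF i] by auto
    then show ?thesis
      by (intro tendsto_mult tendsto_powr tendsto_diff tendsto_const tendsto_coord_nhds[OF i])
  qed
  then have "((\<lambda>y. \<Prod>i<m. y i powr (-1/2) * (1 - y i) powr (real n / 2 - real m - 1/2)) \<longlongrightarrow>
      (\<Prod>i<m. c i powr (-1/2) * (1 - c i) powr (real n / 2 - real m - 1/2))) (coord_nhds m c)"
    by (intro tendsto_prod) auto
  with differences show ?thesis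
    unfolding weight_def by (rule tendsto_mult)
qed

lemma weight_pos:
  assumes "\<And>i. i < m \<Longrightarrow> 0 < c i \<and> c i < 1" and "\<And>i j. i < j \<Longrightarrow> j < m \<Longrightarrow> c i \<noteq> c j"
  shows "0 < weight m n c"
proof -
  have "0 < (if i < j then \<bar>c i - c j\<bar> else 1)" if "j < m" for i j
    using assms(2)[of i j] that by auto
  then have "0 < (\<Prod>i<m. \<Prod>j<m. if i < j then \<bar>c i - c j\<bar> else 1)"
    by (intro prod_pos) auto
  moreover have "0 < c i powr (-1/2) * (1 - c i) powr (real n / 2 - real m - 1/2)" if "i < m" for i
    using assms(1)[OF that] by auto
  then have "0 < (\<Prod>i<m. c i powr (-1/2) * (1 - c i) powr (real n / 2 - real m - 1/2))"
    by (intro prod_pos) auto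
  ultimately show ?thesis
    unfolding weight_def by (rule mult_pos_pos)
qed

text \<open>On the segment from an interior point a with distinct coordinates to b, both f and the
  product of the coordinate differences are univariate polynomials, nonzero at b and at a
  respectively, so points close to a avoid their finitely many roots.\<close>
lemma poly_nonzero_at_generic_point:
  assumes f: "is_poly m k f" and b: "f b \<noteq> 0"
  obtains c where "\<And>i. i < m \<Longrightarrow> 0 < c i \<and> c i < 1"
    "\<And>i j. i < j \<Longrightarrow> j < m \<Longrightarrow> c i \<noteq> c j" "f c \<noteq> 0"
proof -
  define a :: "nat \<Rightarrow> real" where "a = (\<lambda>i. real (Suc i) / real (m + 2))"
  define L where "L = (\<lambda>t::real. \<lambda>i. a i + t * (b i - a i))"
  obtain p where p: "\<And>t. f (L t) = poly p t"
    using is_poly_on_line[OF f, of a b] unfolding L_def by blast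
  define q where
    "q = (\<Prod>i<m. \<Prod>j<m. if i < j then [:a i - a j, (b i - a i) - (b j - a j):] else 1)"
  have q: "poly q t = (\<Prod>i<m. \<Prod>j<m. if i < j then L t i - L t j else 1)" for t
    unfolding q_def L_def poly_prod by (intro prod.cong refl) (auto simp: algebra_simps)
  have "a i - a j \<noteq> 0" if "i < j" for i j using that by (auto simp: a_def divide_simps)
  then have "poly q 0 \<noteq> 0" unfolding q L_def by (auto simp: prod_zero_iff)
  moreover have "poly p 1 \<noteq> 0" using b p[of 1] by (simp add: L_def)
  ultimately have roots: "finite {t. poly (p * q) t = 0}" by (intro poly_roots_finite) auto
  have a01: "0 < a i \<and> a i < 1" if "i < m" for i
    using \<open>i < m\<close> by (auto simp: a_def divide_simps)
  have "eventually (\<lambda>t. \<forall>i\<in>{..<m}. 0 < L t i \<and> L t i < 1) (at_right 0)"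
  proof (intro eventually_ball_finite ballI)
    fix i assume "i \<in> {..<m}"
    have "((\<lambda>t. L t i) \<longlongrightarrow> a i + 0 * (b i - a i)) (at_right 0)"
      unfolding L_def by (intro tendsto_intros)
    then have "((\<lambda>t. L t i) \<longlongrightarrow> a i) (at_right 0)" by simp
    then show "eventually (\<lambda>t. 0 < L t i \<and> L t i < 1) (at_right 0)"
      using a01 \<open>i \<in> {..<m}\<close> by (intro eventually_conj order_tendstoD) auto
  qed auto
  then obtain eps where eps: "eps > 0" "\<And>t. 0 < t \<Longrightarrow> t < eps \<Longrightarrow> \<forall>i<m. 0 < L t i \<and> L t i < 1"
    unfolding eventually_at_right_field by auto
  have "infinite ({0<..<eps} - {t. poly (p * q) t = 0})"
    using roots eps(1) by (intro Diff_infinite_finite) auto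
  then obtain t where t: "t \<in> {0<..<eps}" "poly (p * q) t \<noteq> 0"
    using infinite_imp_nonempty by blast
  show ?thesis
  proof (rule that[of "L t"])
    show "0 < L t i \<and> L t i < 1" if "i < m" for i using eps(2)[of t] t(1) that by auto
    show "f (L t) \<noteq> 0" using t(2) p by simp
    fix i j assume ij: "i < j" "j < m"
    show "L t i \<noteq> L t j"
    proof
      assume "L t i = L t j"
      then have "(\<Prod>j<m. if i < j then L t i - L t j else 1) = 0"
        using ij by (intro prod_zero[OF finite_lessThan bexI[of _ j]]) auto
      then have "\<exists>i'\<in>{..<m}. (\<Prod>j<m. if i' < j then L t i' - L t j else 1) = 0"
        using ij by (intro bexI[of _ i]) auto
      then have "poly q t = 0" unfolding q by (rule prod_zero[OF finite_lessThan])
      then show False using t(2) by simp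
    qed
  qed
qed

lemma integral_pos_near_interior_point:
  fixes g :: "(nat \<Rightarrow> real) \<Rightarrow> real"
  assumes int: "integrable (Lm m) (\<lambda>y. indicator (cube m) y * g y)"
    and nonneg: "\<And>y. y \<in> cube m \<Longrightarrow> 0 \<le> g y"
    and lim: "(g \<longlongrightarrow> g c) (coord_nhds m c)" and pos: "0 < g c"
    and c: "\<And>i. i < m \<Longrightarrow> 0 < c i \<and> c i < 1"
  shows "0 < (\<integral>y. indicator (cube m) y * g y \<partial>Lm m)"
proof -
  have "eventually (\<lambda>y. 0 \<le> y i \<and> y i \<le> 1) (coord_nhds m c)" if i: "i < m" for i
  proof -
    have "eventually (\<lambda>y. 0 < y i) (coord_nhds m c)" "eventually (\<lambda>y. y i < 1) (coord_nhds m c)"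
      using order_tendstoD[OF tendsto_coord_nhds[OF i]] c[OF i] by auto
    then show ?thesis by eventually_elim auto
  qed
  then have "eventually (\<lambda>y. \<forall>i\<in>{..<m}. 0 \<le> y i \<and> y i \<le> 1) (coord_nhds m c)"
    by (intro eventually_ball_finite) auto
  moreover have "eventually (\<lambda>y. g c / 2 < g y) (coord_nhds m c)"
    using lim pos by (intro order_tendstoD(1)) auto
  ultimately have "eventually (\<lambda>y. g c / 2 < g y \<and> y \<in> cube m) (coord_nhds m c)"
    by eventually_elim (auto simp: cube_def)
  then obtain d where d: "d > 0"
    "\<And>y. \<forall>i<m. \<bar>y i - c i\<bar> < d \<Longrightarrow> g c / 2 < g y \<and> y \<in> cube m"
    unfolding eventually_coord_nhds by blast
  define B where "B = PiE {..<m} (\<lambda>i. {c i - d/2 .. c i + d/2})"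
  have B: "B \<in> sets (Lm m)" unfolding B_def Lm_def by (intro sets_PiM_I_finite) auto
  have "emeasure (Lm m) B = (\<Prod>i<m. emeasure lborel {c i - d/2 .. c i + d/2})"
    unfolding B_def Lm_def by (intro lborel_product.emeasure_PiM) auto
  also have "\<dots> = ennreal (d ^ m)" using d(1) by (simp add: ennreal_power)
  finally have emB: "emeasure (Lm m) B = ennreal (d ^ m)" .
  have "0 < (g c / 2) * measure (Lm m) B" using pos d(1) emB by (simp add: measure_def)
  also have "\<dots> = (\<integral>y. (g c / 2) * indicator B y \<partial>Lm m)" using B emB by simp
  also have "\<dots> \<le> (\<integral>y. indicator (cube m) y * g y \<partial>Lm m)"
  proof (rule integral_mono[OF _ int])
    show "integrable (Lm m) (\<lambda>y. g c / 2 * indicator B y)"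
      using B emB by (intro Bochner_Integration.integrable_mult_right integrable_real_indicator) auto
    fix y
    show "g c / 2 * indicator B y \<le> indicator (cube m) y * g y"
    proof (cases "y \<in> B")
      case True
      then have "y i \<in> {c i - d/2 .. c i + d/2}" if "i < m" for i
        using that by (auto simp: B_def PiE_iff)
      then have "\<forall>i<m. \<bar>y i - c i\<bar> < d"
        using d(1) by (fastforce simp: abs_less_iff)
      then have "g c / 2 < g y" "y \<in> cube m" using d(2) by auto
      then show ?thesis using True by simp
    next
      case False
      then show ?thesis using nonneg by (simp add: indicator_def)
    qed
  qed
  finally show ?thesis .
qed

lemma weighted_square_integral_pos:
  assumes "2 * m \<le> n" "is_poly m k f" "f b \<noteq> 0"
  shows "0 < (\<integral>y. indicator (cube m) y * weight m n y * (f y * f y) \<partial>Lm m)"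
proof -
  obtain c where c: "\<And>i. i < m \<Longrightarrow> 0 < c i \<and> c i < 1"
    "\<And>i j. i < j \<Longrightarrow> j < m \<Longrightarrow> c i \<noteq> c j" "f c \<noteq> 0"
    using poly_nonzero_at_generic_point[OF assms(2,3)] by blast
  define g where "g = (\<lambda>y. weight m n y * (f y * f y))"
  have "0 < (\<integral>y. indicator (cube m) y * g y \<partial>Lm m)"
  proof (rule integral_pos_near_interior_point[OF _ _ _ _ c(1)])
    show "integrable (Lm m) (\<lambda>y. indicator (cube m) y * g y)"
      using integrable_weighted_poly_mult[OF assms(1,2,2)] by (simp add: g_def mult.assoc)
    show "0 \<le> g y" for y using weight_nonneg by (simp add: g_def)
    show "(g \<longlongrightarrow> g c) (coord_nhds m c)" unfolding g_def
      by (intro tendsto_intros tendsto_weight_coord_nhds tendsto_poly_coord_nhds[OF assms(2)] c(1))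
    have "0 < f c * f c" using c(3) not_real_square_gt_zero[of "f c"] by blast
    with weight_pos[of m c n, OF c(1,2)] show "0 < g c"
      unfolding g_def by (rule mult_pos_pos)
  qed
  then show ?thesis by (simp add: g_def mult.assoc)
qed

section \<open>The inner product on polynomial functions\<close>

lemma ip_conv_integral:
  "ip m n f g = norm_const m n * (\<integral>y. indicator (cube m) y * weight m n y * (f y * g y) \<partial>Lm m)"
  unfolding ip_def by (simp add: mult.assoc)

lemma ip_commute: "ip m n f g = ip m n g f"
  unfolding ip_conv_integral by (simp add: mult.commute)

lemma ip_sigma_mult_left: "ip m n (\<lambda>y. sigma m y * f y) g = ip m n f (\<lambda>y. sigma m y * g y)"
  unfolding ip_conv_integral by (simp add: mult_ac)

lemma ip_zero_left: "ip m n (\<lambda>_. 0) g = 0"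
  unfolding ip_conv_integral by simp

lemma ip_cmult_left: "ip m n (\<lambda>y. a * f y) g = a * ip m n f g"
  unfolding ip_conv_integral by (simp add: mult_ac)

lemma ip_add_left:
  assumes "2 * m \<le> n" "is_poly m k f" "is_poly m k' h" "is_poly m k'' g"
  shows "ip m n (\<lambda>y. f y + h y) g = ip m n f g + ip m n h g"
proof -
  have "(\<integral>y. indicator (cube m) y * weight m n y * ((f y + h y) * g y) \<partial>Lm m) =
      (\<integral>y. indicator (cube m) y * weight m n y * (f y * g y)
         + indicator (cube m) y * weight m n y * (h y * g y) \<partial>Lm m)"
    by (intro Bochner_Integration.integral_cong refl) (simp add: algebra_simps)
  also have "\<dots> = (\<integral>y. indicator (cube m) y * weight m n y * (f y * g y) \<partial>Lm m) +
      (\<integral>y. indicator (cube m) y * weight m n y * (h y * g y) \<partial>Lm m)"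
    using assms by (intro Bochner_Integration.integral_add integrable_weighted_poly_mult)
  finally show ?thesis unfolding ip_conv_integral by (simp add: distrib_left)
qed

lemma ip_diff_left:
  assumes "2 * m \<le> n" "is_poly m k f" "is_poly m k' h" "is_poly m k'' g"
  shows "ip m n (\<lambda>y. f y - h y) g = ip m n f g - ip m n h g"
  using ip_add_left[OF assms(1,2) is_poly_cmult[OF assms(3), of "-1"] assms(4)]
    ip_cmult_left[of m n "-1" h g]
  by simp

lemma ip_lincomb_left:
  assumes "2 * m \<le> n" "finite N" "\<And>x. x \<in> N \<Longrightarrow> is_poly m (d x) (F x)" "is_poly m k g"
  shows "ip m n (\<lambda>y. \<Sum>x\<in>N. c x * F x y) g = (\<Sum>x\<in>N. c x * ip m n (F x) g)"
proof -
  have "(\<integral>y. indicator (cube m) y * weight m n y * ((\<Sum>x\<in>N. c x * F x y) * g y) \<partial>Lm m) =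
      (\<integral>y. (\<Sum>x\<in>N. c x * (indicator (cube m) y * weight m n y * (F x y * g y))) \<partial>Lm m)"
    by (intro Bochner_Integration.integral_cong refl) (simp add: sum_distrib_left sum_distrib_right mult_ac)
  also have "\<dots> = (\<Sum>x\<in>N. c x * (\<integral>y. indicator (cube m) y * weight m n y * (F x y * g y) \<partial>Lm m))"
    using assms by (subst Bochner_Integration.integral_sum)
      (auto intro!: Bochner_Integration.integrable_mult_right integrable_weighted_poly_mult)
  finally show ?thesis unfolding ip_conv_integral by (simp add: sum_distrib_left mult_ac)
qed

lemma ip_lincomb_right:
  assumes "2 * m \<le> n" "finite N" "\<And>x. x \<in> N \<Longrightarrow> is_poly m (d x) (F x)" "is_poly m k g"
  shows "ip m n g (\<lambda>y. \<Sum>x\<in>N. c x * F x y) = (\<Sum>x\<in>N. c x * ip m n g (F x))"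
  using ip_lincomb_left[OF assms] by (simp add: ip_commute)

lemma norm_const_pos: "2 * m \<le> n \<Longrightarrow> 0 < norm_const m n"
  using weighted_square_integral_pos[OF _ is_poly_const[of m 0 1]] unfolding norm_const_def by simp

lemma ip_self_pos:
  assumes "2 * m \<le> n" "is_poly m k f" "f b \<noteq> 0"
  shows "0 < ip m n f f"
  using weighted_square_integral_pos[OF assms] norm_const_pos[OF assms(1)]
  unfolding ip_conv_integral by simp

lemma ip_self_eq_0_iff:
  assumes "2 * m \<le> n" "is_poly m k f"
  shows "ip m n f f = 0 \<longleftrightarrow> f = (\<lambda>_. 0)"
  using ip_self_pos[OF assms] ip_zero_left by fastforce

lemma symmetric_fn_const: "symmetric_fn m (\<lambda>_. c)"
  by (simp add: symmetric_fn_def)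

lemma symmetric_fn_add: "symmetric_fn m f \<Longrightarrow> symmetric_fn m g \<Longrightarrow> symmetric_fn m (\<lambda>y. f y + g y)"
  by (simp add: symmetric_fn_def)

lemma symmetric_fn_cmult: "symmetric_fn m f \<Longrightarrow> symmetric_fn m (\<lambda>y. a * f y)"
  by (simp add: symmetric_fn_def)

lemma symmetric_fn_sigma_mult:
  assumes "symmetric_fn m f"
  shows "symmetric_fn m (\<lambda>y. sigma m y * f y)"
  unfolding symmetric_fn_def
proof (intro allI impI)
  fix \<pi> y assume \<pi>: "\<pi> permutes {..<m}"
  have "sigma m (y \<circ> \<pi>) = sigma m y"
    unfolding sigma_def using sum.permute[OF \<pi>, of y] by simp
  then show "sigma m (y \<circ> \<pi>) * f (y \<circ> \<pi>) = sigma m y * f y"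
    using assms \<pi> by (simp add: symmetric_fn_def)
qed

lemma Sk_const: "(\<lambda>_. c) \<in> Sk m k"
  by (simp add: Sk_def is_poly_const symmetric_fn_const)

lemma Sk_add: "f \<in> Sk m k \<Longrightarrow> g \<in> Sk m k \<Longrightarrow> (\<lambda>y. f y + g y) \<in> Sk m k"
  by (simp add: Sk_def is_poly_add symmetric_fn_add)

lemma Sk_cmult: "f \<in> Sk m k \<Longrightarrow> (\<lambda>y. a * f y) \<in> Sk m k"
  by (simp add: Sk_def is_poly_cmult symmetric_fn_cmult)

lemma Sk_diff: "f \<in> Sk m k \<Longrightarrow> g \<in> Sk m k \<Longrightarrow> (\<lambda>y. f y - g y) \<in> Sk m k"
  using Sk_add[of f m k "\<lambda>y. (-1) * g y"] Sk_cmult[of g m k "-1"] by simp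

lemma Sk_sum: "finite N \<Longrightarrow> (\<And>x. x \<in> N \<Longrightarrow> F x \<in> Sk m k) \<Longrightarrow> (\<lambda>y. \<Sum>x\<in>N. F x y) \<in> Sk m k"
  by (induction N rule: finite_induct) (auto intro: Sk_add Sk_const[of 0, simplified])

lemma Sk_mono: "f \<in> Sk m k \<Longrightarrow> k \<le> k' \<Longrightarrow> f \<in> Sk m k'"
  by (auto simp: Sk_def intro: is_poly_mono)

lemma Sk_sigma_mult: "f \<in> Sk m k \<Longrightarrow> (\<lambda>y. sigma m y * f y) \<in> Sk m (Suc k)"
  by (simp add: Sk_def is_poly_sigma_mult symmetric_fn_sigma_mult)

lemma Tk_eqI:
  assumes mn: "2 * m \<le> n" and f: "is_poly m j f" and h: "h \<in> Sk m k"
    and orth: "\<And>q. q \<in> Sk m k \<Longrightarrow> ip m n (\<lambda>y. sigma m y * f y - h y) q = 0"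
  shows "Tk m n k f = h"
  unfolding Tk_def
proof (rule the_equality)
  show "h \<in> Sk m k \<and> (\<forall>q\<in>Sk m k. ip m n (\<lambda>y. sigma m y * f y - h y) q = 0)"
    using h orth by blast
next
  fix h' assume h': "h' \<in> Sk m k \<and> (\<forall>q\<in>Sk m k. ip m n (\<lambda>y. sigma m y * f y - h' y) q = 0)"
  define D where "D = (\<lambda>y. h y - h' y)"
  have D: "D \<in> Sk m k" unfolding D_def using h h' by (intro Sk_diff) auto
  then have polys: "is_poly m k h" "is_poly m k h'" "is_poly m k D" using h h' by (auto simp: Sk_def)
  have residual_poly: "is_poly m (Suc j + k) (\<lambda>y. sigma m y * f y - g y)" if "is_poly m k g" for g
    by (rule is_poly_diff[OF is_poly_mono[OF is_poly_sigma_mult[OF f]] is_poly_mono[OF that]]) auto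
  have "(\<lambda>y. (sigma m y * f y - h' y) - (sigma m y * f y - h y)) = D"
    by (simp add: D_def fun_eq_iff)
  then have "ip m n D D = ip m n (\<lambda>y. (sigma m y * f y - h' y) - (sigma m y * f y - h y)) D"
    by simp
  also have "\<dots> = ip m n (\<lambda>y. sigma m y * f y - h' y) D - ip m n (\<lambda>y. sigma m y * f y - h y) D"
    by (rule ip_diff_left[OF mn residual_poly[OF polys(2)] residual_poly[OF polys(1)] polys(3)])
  also have "\<dots> = 0" using h' orth[OF D] D by simp
  finally have "D = (\<lambda>_. 0)" using ip_self_eq_0_iff[OF mn polys(3)] by simp
  then show "h' = h" by (simp add: D_def fun_eq_iff)
qed

lemma finite_parts_le: "finite (parts_le m j)"
proof -
  have "parts_le m j \<subseteq> (\<lambda>g i. if i < m then g i else 0) ` (PiE {..<m} (\<lambda>_. {..j}))"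
  proof
    fix \<kappa> assume "\<kappa> \<in> parts_le m j"
    then have \<kappa>: "\<forall>i\<ge>m. \<kappa> i = 0" "(\<Sum>i<m. \<kappa> i) \<le> j"
      by (auto simp: parts_le_def is_partition_def psize_def)
    have "\<kappa> i \<le> j" if "i < m" for i
      using member_le_sum[of i "{..<m}" \<kappa>] that \<kappa>(2) by simp
    then have "restrict \<kappa> {..<m} \<in> PiE {..<m} (\<lambda>_. {..j})" by auto
    moreover have "\<kappa> = (\<lambda>i. if i < m then restrict \<kappa> {..<m} i else 0)"
      using \<kappa>(1) by (auto simp: fun_eq_iff not_less)
    ultimately show "\<kappa> \<in> (\<lambda>g i. if i < m then g i else 0) ` (PiE {..<m} (\<lambda>_. {..j}))"
      by (intro image_eqI)
  qed
  moreover have "finite (PiE {..<m} (\<lambda>_. {..j::nat}))" by (intro finite_PiE) auto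
  ultimately show ?thesis using finite_subset by blast
qed

lemma parts_eq_subset_parts_le: "parts_eq m j \<subseteq> parts_le m j"
  by (auto simp: parts_eq_def parts_le_def)

lemma finite_parts_eq: "finite (parts_eq m j)"
  using finite_subset[OF parts_eq_subset_parts_le finite_parts_le] .

section \<open>The reproducing kernel of S_k\<close>

locale zonal_system =
  fixes m n :: nat and P :: "(nat \<Rightarrow> nat) \<Rightarrow> (nat \<Rightarrow> real) \<Rightarrow> real"
  assumes dim: "2 * m \<le> n" and zonal: "zonal_family m n P"
begin

lemma P_Sk: "is_partition m \<kappa> \<Longrightarrow> P \<kappa> \<in> Sk m (psize m \<kappa>)"
  using zonal by (simp add: zonal_family_def)

lemma P_poly: "is_partition m \<kappa> \<Longrightarrow> is_poly m (psize m \<kappa>) (P \<kappa>)"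
  using P_Sk by (simp add: Sk_def)

lemma P_orthogonal: "is_partition m \<kappa> \<Longrightarrow> is_partition m \<rho> \<Longrightarrow> \<kappa> \<noteq> \<rho> \<Longrightarrow> ip m n (P \<kappa>) (P \<rho>) = 0"
  using zonal by (simp add: zonal_family_def)

lemma Sk_P_expansion:
  assumes "f \<in> Sk m j"
  obtains c where "f = (\<lambda>y. \<Sum>\<kappa>\<in>parts_le m j. c \<kappa> * P \<kappa> y)"
  using zonal assms unfolding zonal_family_def by blast

lemma ip_P_self_pos: "is_partition m \<kappa> \<Longrightarrow> 0 < ip m n (P \<kappa>) (P \<kappa>)"
  using zonal ip_self_pos[OF dim P_poly, of \<kappa> "\<lambda>_. 1"] by (simp add: zonal_family_def)

lemma ip_lincomb_P_P:
  assumes "finite S" "\<And>\<kappa>. \<kappa> \<in> S \<Longrightarrow> is_partition m \<kappa>" "is_partition m \<nu>"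
  shows "ip m n (\<lambda>y. \<Sum>\<kappa>\<in>S. c \<kappa> * P \<kappa> y) (P \<nu>) = (if \<nu> \<in> S then c \<nu> * ip m n (P \<nu>) (P \<nu>) else 0)"
proof -
  have "ip m n (\<lambda>y. \<Sum>\<kappa>\<in>S. c \<kappa> * P \<kappa> y) (P \<nu>) = (\<Sum>\<kappa>\<in>S. c \<kappa> * ip m n (P \<kappa>) (P \<nu>))"
    using assms by (intro ip_lincomb_left[OF dim _ P_poly P_poly])
  also have "\<dots> = (\<Sum>\<kappa>\<in>S. if \<kappa> = \<nu> then c \<nu> * ip m n (P \<nu>) (P \<nu>) else 0)"
    using assms P_orthogonal by (intro sum.cong) auto
  finally show ?thesis using assms(1) by simp
qed

lemma lincomb_P_Sk: "S \<subseteq> parts_le m k \<Longrightarrow> (\<lambda>y. \<Sum>\<kappa>\<in>S. c \<kappa> * P \<kappa> y) \<in> Sk m k"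
  by (intro Sk_sum Sk_cmult Sk_mono[OF P_Sk] finite_subset[OF _ finite_parts_le])
    (auto simp: parts_le_def)

definition zonal_kernel :: "nat \<Rightarrow> (nat \<Rightarrow> real) \<Rightarrow> (nat \<Rightarrow> real) \<Rightarrow> real" where
  "zonal_kernel k \<alpha> = (\<lambda>y. \<Sum>\<nu>\<in>parts_le m k. dz m n P \<nu> * P \<nu> \<alpha> * P \<nu> y)"

lemma zonal_kernel_Sk: "zonal_kernel k \<alpha> \<in> Sk m k"
  unfolding zonal_kernel_def by (rule lincomb_P_Sk) simp

lemma ip_zonal_kernel_P:
  assumes "is_partition m \<rho>"
  shows "ip m n (zonal_kernel k \<alpha>) (P \<rho>) = (if psize m \<rho> \<le> k then P \<rho> \<alpha> else 0)"
  using assms ip_P_self_pos[OF assms] unfolding zonal_kernel_def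
  by (subst ip_lincomb_P_P[OF finite_parts_le]) (auto simp: parts_le_def dz_def)

lemma ip_zonal_kernel:
  assumes "f \<in> Sk m k"
  shows "ip m n (zonal_kernel k \<alpha>) f = f \<alpha>"
proof -
  obtain c where f: "f = (\<lambda>y. \<Sum>\<kappa>\<in>parts_le m k. c \<kappa> * P \<kappa> y)"
    using assms by (rule Sk_P_expansion)
  have "ip m n (zonal_kernel k \<alpha>) f = (\<Sum>\<kappa>\<in>parts_le m k. c \<kappa> * ip m n (zonal_kernel k \<alpha>) (P \<kappa>))"
    unfolding f using zonal_kernel_Sk
    by (intro ip_lincomb_right[OF dim finite_parts_le P_poly]) (auto simp: Sk_def parts_le_def)
  also have "\<dots> = f \<alpha>"
    unfolding f by (intro sum.cong refl) (auto simp: ip_zonal_kernel_P parts_le_def)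
  finally show ?thesis .
qed

lemma zonal_kernel_nonzero: "zonal_kernel k \<alpha> \<noteq> (\<lambda>_. 0)"
  using ip_zonal_kernel[OF Sk_const[of 1 m k], of \<alpha>] ip_zero_left by force

lemma ip_zonal_kernel_add_top_degree:
  assumes "r \<in> Sk m k"
  shows "ip m n (zonal_kernel k \<alpha>) (\<lambda>y. (\<Sum>\<mu>\<in>parts_eq m (k + 1). a \<mu> * P \<mu> y) + r y) = r \<alpha>"
proof -
  have top_poly: "is_poly m (k + 1) (\<lambda>y. \<Sum>\<mu>\<in>parts_eq m (k + 1). a \<mu> * P \<mu> y)"
    using lincomb_P_Sk[OF parts_eq_subset_parts_le] by (simp add: Sk_def)
  have "ip m n (zonal_kernel k \<alpha>) (\<lambda>y. \<Sum>\<mu>\<in>parts_eq m (k + 1). a \<mu> * P \<mu> y) =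
      (\<Sum>\<mu>\<in>parts_eq m (k + 1). a \<mu> * ip m n (zonal_kernel k \<alpha>) (P \<mu>))"
    using zonal_kernel_Sk
    by (intro ip_lincomb_right[OF dim finite_parts_eq P_poly]) (auto simp: Sk_def parts_eq_def)
  also have "\<dots> = 0" by (simp add: ip_zonal_kernel_P parts_eq_def)
  finally have top_orth: "ip m n (\<lambda>y. \<Sum>\<mu>\<in>parts_eq m (k + 1). a \<mu> * P \<mu> y) (zonal_kernel k \<alpha>) = 0"
    by (simp add: ip_commute)
  have "ip m n (\<lambda>y. (\<Sum>\<mu>\<in>parts_eq m (k + 1). a \<mu> * P \<mu> y) + r y) (zonal_kernel k \<alpha>) =
      ip m n (\<lambda>y. \<Sum>\<mu>\<in>parts_eq m (k + 1). a \<mu> * P \<mu> y) (zonal_kernel k \<alpha>) +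
      ip m n r (zonal_kernel k \<alpha>)"
    using assms zonal_kernel_Sk[of k \<alpha>] unfolding Sk_def by (intro ip_add_left[OF dim top_poly]) auto
  also have "\<dots> = r \<alpha>" using top_orth ip_zonal_kernel[OF assms] by (simp add: ip_commute)
  finally show ?thesis by (simp add: ip_commute)
qed

text \<open>By hypothesis top, the sum over A is the component Q_\<rho> of degree k + 1 of \<sigma> P_\<rho>.\<close>
lemma ip_sigma_mult_zonal_kernel_P:
  assumes top: "\<And>\<rho>. \<rho> \<in> parts_eq m k \<Longrightarrow>
      (\<lambda>y. sigma m y * P \<rho> y - (\<Sum>\<mu>\<in>parts_eq m (k + 1). A \<rho> \<mu> * P \<mu> y)) \<in> Sk m k"
    and zero: "\<And>\<rho>. \<rho> \<in> parts_eq m k \<Longrightarrow> (\<Sum>\<mu>\<in>parts_eq m (k + 1). A \<rho> \<mu> * P \<mu> \<alpha>) = 0"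
    and \<rho>: "\<rho> \<in> parts_le m k"
  shows "ip m n (\<lambda>y. sigma m y * zonal_kernel k \<alpha> y) (P \<rho>) = sigma m \<alpha> * P \<rho> \<alpha>"
proof (cases "psize m \<rho> < k")
  case True
  then have "(\<lambda>y. sigma m y * P \<rho> y) \<in> Sk m k"
    using \<rho> by (intro Sk_mono[OF Sk_sigma_mult[OF P_Sk]]) (auto simp: parts_le_def)
  then show ?thesis by (simp add: ip_sigma_mult_left ip_zonal_kernel)
next
  case False
  then have \<rho>k: "\<rho> \<in> parts_eq m k" using \<rho> by (auto simp: parts_le_def parts_eq_def)
  define r where "r = (\<lambda>y. sigma m y * P \<rho> y - (\<Sum>\<mu>\<in>parts_eq m (k + 1). A \<rho> \<mu> * P \<mu> y))"
  have "ip m n (\<lambda>y. sigma m y * zonal_kernel k \<alpha> y) (P \<rho>) =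
      ip m n (zonal_kernel k \<alpha>) (\<lambda>y. (\<Sum>\<mu>\<in>parts_eq m (k + 1). A \<rho> \<mu> * P \<mu> y) + r y)"
    by (simp add: ip_sigma_mult_left r_def)
  also have "\<dots> = r \<alpha>"
    using top[OF \<rho>k] unfolding r_def by (rule ip_zonal_kernel_add_top_degree)
  also have "\<dots> = sigma m \<alpha> * P \<rho> \<alpha>" using zero[OF \<rho>k] by (simp add: r_def)
  finally show ?thesis .
qed

lemma Tk_zonal_kernel:
  assumes "\<And>\<rho>. \<rho> \<in> parts_le m k \<Longrightarrow>
      ip m n (\<lambda>y. sigma m y * zonal_kernel k \<alpha> y) (P \<rho>) = sigma m \<alpha> * P \<rho> \<alpha>"
  shows "Tk m n k (zonal_kernel k \<alpha>) = (\<lambda>y. sigma m \<alpha> * zonal_kernel k \<alpha> y)"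
proof -
  define K where "K = zonal_kernel k \<alpha>"
  have K: "is_poly m k K" using zonal_kernel_Sk by (simp add: K_def Sk_def)
  have residual: "is_poly m (Suc k) (\<lambda>y. sigma m y * K y - sigma m \<alpha> * K y)"
    by (intro is_poly_diff is_poly_sigma_mult[OF K] is_poly_mono[OF is_poly_cmult[OF K]]) auto
  have residual_P: "ip m n (\<lambda>y. sigma m y * K y - sigma m \<alpha> * K y) (P \<rho>) = 0"
    if \<rho>: "\<rho> \<in> parts_le m k" for \<rho>
  proof -
    have \<rho>': "is_partition m \<rho>" "psize m \<rho> \<le> k" using \<rho> by (auto simp: parts_le_def)
    have "ip m n (\<lambda>y. sigma m y * K y - sigma m \<alpha> * K y) (P \<rho>) =
        ip m n (\<lambda>y. sigma m y * K y) (P \<rho>) - ip m n (\<lambda>y. sigma m \<alpha> * K y) (P \<rho>)"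
      by (rule ip_diff_left[OF dim is_poly_sigma_mult[OF K] is_poly_cmult[OF K] P_poly[OF \<rho>'(1)]])
    also have "\<dots> = 0"
      using assms[OF \<rho>] ip_zonal_kernel_P[OF \<rho>'(1), of k \<alpha>] \<rho>'(2)
      by (simp add: K_def ip_cmult_left)
    finally show ?thesis .
  qed
  have "Tk m n k K = (\<lambda>y. sigma m \<alpha> * K y)"
  proof (rule Tk_eqI[OF dim K])
    show "(\<lambda>y. sigma m \<alpha> * K y) \<in> Sk m k" unfolding K_def by (intro Sk_cmult zonal_kernel_Sk)
    fix q assume "q \<in> Sk m k"
    then obtain c where q: "q = (\<lambda>y. \<Sum>\<rho>\<in>parts_le m k. c \<rho> * P \<rho> y)" by (rule Sk_P_expansion)
    show "ip m n (\<lambda>y. sigma m y * K y - sigma m \<alpha> * K y) q = 0"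
      unfolding q using residual_P
      by (subst ip_lincomb_right[OF dim finite_parts_le P_poly residual]) (auto simp: parts_le_def)
  qed
  then show ?thesis by (simp add: K_def)
qed

end

theorem lemma4p3:
  fixes m n k :: nat
    and P :: "(nat \<Rightarrow> nat) \<Rightarrow> (nat \<Rightarrow> real) \<Rightarrow> real"
    and A B C :: "(nat \<Rightarrow> nat) \<Rightarrow> (nat \<Rightarrow> nat) \<Rightarrow> real"
    and \<alpha> :: "nat \<Rightarrow> real"
  assumes "1 \<le> m" and "2 * m \<le> n"
    and zonal: "zonal_family m n P"
    and rec: "\<And>\<kappa>. \<kappa> \<in> parts_eq m k \<Longrightarrow>
       (\<lambda>y. sigma m y * P \<kappa> y) =
       (\<lambda>y. (\<Sum>\<mu>\<in>parts_eq m (k + 1). A \<kappa> \<mu> * P \<mu> y)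
          + (\<Sum>\<mu>\<in>parts_eq m k. B \<kappa> \<mu> * P \<mu> y)
          + (\<Sum>\<mu>\<in>{\<mu>. is_partition m \<mu> \<and> psize m \<mu> + 1 = k}. C \<kappa> \<mu> * P \<mu> y))"
    and alpha: "\<alpha> \<in> cube m"
    and zero: "\<And>\<kappa>. \<kappa> \<in> parts_eq m k \<Longrightarrow> (\<Sum>\<mu>\<in>parts_eq m (k + 1). A \<kappa> \<mu> * P \<mu> \<alpha>) = 0"
  shows "let v = (\<lambda>y. \<Sum>\<nu>\<in>parts_le m k. dz m n P \<nu> * P \<nu> \<alpha> * P \<nu> y)
         in v \<in> Sk m k \<and> v \<noteq> (\<lambda>_. 0) \<and> Tk m n k v = (\<lambda>y. sigma m \<alpha> * v y)"
proof -
  interpret zonal_system m n P using \<open>2 * m \<le> n\<close> zonal by unfold_locales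
  have top: "(\<lambda>y. sigma m y * P \<rho> y - (\<Sum>\<mu>\<in>parts_eq m (k + 1). A \<rho> \<mu> * P \<mu> y)) \<in> Sk m k"
    if \<rho>: "\<rho> \<in> parts_eq m k" for \<rho>
  proof -
    have "(\<lambda>y. sigma m y * P \<rho> y - (\<Sum>\<mu>\<in>parts_eq m (k + 1). A \<rho> \<mu> * P \<mu> y)) =
        (\<lambda>y. (\<Sum>\<mu>\<in>parts_eq m k. B \<rho> \<mu> * P \<mu> y)
           + (\<Sum>\<mu>\<in>{\<mu>. is_partition m \<mu> \<and> psize m \<mu> + 1 = k}. C \<rho> \<mu> * P \<mu> y))"
      using fun_cong[OF rec[OF \<rho>]] by (simp add: fun_eq_iff)
    also have "\<dots> \<in> Sk m k"
      by (intro Sk_add lincomb_P_Sk) (auto simp: parts_eq_def parts_le_def)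
    finally show ?thesis .
  qed
  have "Tk m n k (zonal_kernel k \<alpha>) = (\<lambda>y. sigma m \<alpha> * zonal_kernel k \<alpha> y)"
    using top zero by (intro Tk_zonal_kernel ip_sigma_mult_zonal_kernel_P)
  then show ?thesis
    using zonal_kernel_Sk zonal_kernel_nonzero unfolding Let_def zonal_kernel_def by simp
qed

end
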